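(* Let $P=\{S_1,\ldots,S_n\}$ be a homothetic square packing with contact graph $G=([n],E)$ whose radii satisfy the weak generic condition. Then there do not exist six distinct vertices $a_1,\ldots,a_6\in[n]$ such that all of the pairs $\{a_1,a_2\},\{a_1,a_4\},\{a_1,a_5\},\{a_2,a_3\},\{a_2,a_4\},\{a_2,a_5\},\{a_2,a_6\},\{a_3,a_5\},\{a_3,a_6\},\{a_4,a_5\},\{a_5,a_6\}$ are edges of $G$.
   Context: Let $S=\{(x,y): -1\le x,y\le 1\}$. A homothetic packing of $n$ squares is a set $P=\{S_1,\ldots,S_n\}$ with $S_i=r_iS+p_i$, $r_i>0$ (radii), $p_i\in\mathbb{R}^2$ (centres), such that distinct squares have disjoint interiors. Its contact graph is $G=([n],E)$ where $\{i,j\}\in E$ iff $i\ne j$ and $S_i\cap S_j\ne\emptyset$. The radii satisfy the weak generic condition if the only function $\sigma:[n]\to\{-1,0,1\}$ with at least $4$ zeroes and $\sum_{i=1}^n\sigma_ir_i=0$ is the zero function. *)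

theory Defs
  imports "HOL-Analysis.Analysis"
begin

definition unit_square :: "(real \<times> real) set" where
  "unit_square = {(x, y). -1 \<le> x \<and> x \<le> 1 \<and> -1 \<le> y \<and> y \<le> 1}"

definition hsquare :: "real \<Rightarrow> real \<times> real \<Rightarrow> (real \<times> real) set" where
  "hsquare r p = (\<lambda>q. r *\<^sub>R q + p) ` unit_square"

definition homothetic_packing :: "nat \<Rightarrow> (nat \<Rightarrow> real) \<Rightarrow> (nat \<Rightarrow> real \<times> real) \<Rightarrow> bool" where
  "homothetic_packing n r p \<longleftrightarrow>
     (\<forall>i\<in>{1..n}. r i > 0) \<and>
     (\<forall>i\<in>{1..n}. \<forall>j\<in>{1..n}. i \<noteq> j \<longrightarrow>
        interior (hsquare (r i) (p i)) \<inter> interior (hsquare (r j) (p j)) = {})"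

definition contact_edge :: "(nat \<Rightarrow> real) \<Rightarrow> (nat \<Rightarrow> real \<times> real) \<Rightarrow> nat \<Rightarrow> nat \<Rightarrow> bool" where
  "contact_edge r p i j \<longleftrightarrow> i \<noteq> j \<and> hsquare (r i) (p i) \<inter> hsquare (r j) (p j) \<noteq> {}"

definition weak_generic :: "nat \<Rightarrow> (nat \<Rightarrow> real) \<Rightarrow> bool" where
  "weak_generic n r \<longleftrightarrow>
     (\<forall>\<sigma> :: nat \<Rightarrow> int. (\<forall>i\<in>{1..n}. \<sigma> i \<in> {-1, 0, 1}) \<and>
        card {i\<in>{1..n}. \<sigma> i = 0} \<ge> 4 \<and>
        (\<Sum>i\<in>{1..n}. of_int (\<sigma> i) * r i) = 0
        \<longrightarrow> (\<forall>i\<in>{1..n}. \<sigma> i = 0))"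

end

theory Submission
  imports Defs
begin

text \<open>Let squares \<open>a\<close> and \<open>b\<close> of different radii touch. After a symmetry of the plane they
  touch along a vertical line \<open>L\<close>, with \<open>a\<close> on the left. A common neighbour \<open>c\<close> of \<open>a\<close> and \<open>b\<close>
  meets \<open>L\<close>; as it overlaps neither of them, it either rests on top of the contact (its bottom
  edge at the lower of the two top edges) or hangs below it (its top edge at the higher of the two
  bottom edges). Together with whether its right edge lies on \<open>L\<close> this gives four slots, and two
  common neighbours in the same slot overlap. If the top edges of \<open>a\<close> and \<open>b\<close> are at different
  heights, the taller square blocks one upper slot, and likewise for the bottom edges. As the radii
  differ, the tops or the bottoms differ, so at most three slots are usable. In the theorem,
  \<open>a\<^sub>2\<close> and \<open>a\<^sub>5\<close> touch and have the four common neighbours \<open>a\<^sub>1, a\<^sub>3, a\<^sub>4, a\<^sub>6\<close>, and weak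
  genericity forbids equal radii.\<close>

text \<open>Square \<open>i\<close> has centre \<open>(x i, y i)\<close> and radius \<open>r i\<close>; \<open>squares_apart\<close> means disjoint
  interiors and \<open>squares_touch\<close> means that the closed squares meet.\<close>

definition squares_apart ::
    "('a \<Rightarrow> real) \<Rightarrow> ('a \<Rightarrow> real) \<Rightarrow> ('a \<Rightarrow> real) \<Rightarrow> 'a \<Rightarrow> 'a \<Rightarrow> bool" where
  "squares_apart x y r i j \<longleftrightarrow> r i + r j \<le> \<bar>x i - x j\<bar> \<or> r i + r j \<le> \<bar>y i - y j\<bar>"

definition squares_touch ::
    "('a \<Rightarrow> real) \<Rightarrow> ('a \<Rightarrow> real) \<Rightarrow> ('a \<Rightarrow> real) \<Rightarrow> 'a \<Rightarrow> 'a \<Rightarrow> bool" where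
  "squares_touch x y r i j \<longleftrightarrow> \<bar>x i - x j\<bar> \<le> r i + r j \<and> \<bar>y i - y j\<bar> \<le> r i + r j"

lemma squares_apart_axis_symmetries:
  "squares_apart y x r = squares_apart x y r"
  "squares_apart (\<lambda>i. - x i) y r = squares_apart x y r"
  "squares_apart x (\<lambda>i. - y i) r = squares_apart x y r"
  by (auto simp: squares_apart_def fun_eq_iff abs_minus_commute)

lemma squares_touch_axis_symmetries:
  "squares_touch y x r = squares_touch x y r"
  "squares_touch (\<lambda>i. - x i) y r = squares_touch x y r"
  "squares_touch x (\<lambda>i. - y i) r = squares_touch x y r"
  by (auto simp: squares_touch_def fun_eq_iff abs_minus_commute)

lemma squares_touch_straddles_contact_line:
  assumes "x b = x a + r a + r b" "squares_touch x y r a c" "squares_touch x y r b c"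
  shows "x c - r c \<le> x a + r a" "x a + r a \<le> x c + r c"
  using assms unfolding squares_touch_def abs_le_iff by linarith+

lemma common_neighbours_same_slot_overlap:
  assumes "r c > 0" "r d > 0" "x b = x a + r a + r b"
    and "squares_touch x y r a c" "squares_touch x y r b c"
    and "squares_touch x y r a d" "squares_touch x y r b d"
    and "y c - r c = y d - r d \<or> y c + r c = y d + r d"
    and "x c + r c = x a + r a \<longleftrightarrow> x d + r d = x a + r a"
  shows "\<not> squares_apart x y r c d"
proof -
  have "x c - r c \<le> x a + r a" "x a + r a \<le> x c + r c"
    "x d - r d \<le> x a + r a" "x a + r a \<le> x d + r d"
    using squares_touch_straddles_contact_line[OF assms(3,4,5)]
      squares_touch_straddles_contact_line[OF assms(3,6,7)] by auto
  then have "\<bar>x c - x d\<bar> < r c + r d"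
    using assms(1,2,9) by (cases "x c + r c = x a + r a") (simp_all add: abs_less_iff)
  moreover have "\<bar>y c - y d\<bar> < r c + r d"
    using assms(1,2,8) unfolding abs_less_iff by linarith
  ultimately show ?thesis by (auto simp: squares_apart_def)
qed

lemma common_neighbour_above_or_below:
  assumes "r a > 0" "r b > 0" "r c > 0" "x b = x a + r a + r b"
    and "squares_touch x y r a c" "squares_touch x y r b c"
    and "squares_apart x y r a c" "squares_apart x y r b c"
  shows "y c - r c = min (y a + r a) (y b + r b) \<or> y c + r c = max (y a - r a) (y b - r b)"
proof -
  have "x c - r c \<le> x a + r a" "x a + r a \<le> x c + r c"
    using squares_touch_straddles_contact_line[OF assms(4-6)] by auto
  then have "r a + r c \<le> \<bar>y a - y c\<bar> \<or> r b + r c \<le> \<bar>y b - y c\<bar>"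
    using assms(1-4,7,8) unfolding squares_apart_def abs_le_iff by linarith
  then show ?thesis
    using assms(5,6) unfolding squares_touch_def abs_le_iff by linarith
qed

lemma common_neighbour_above_side:
  assumes "r a > 0" "r b > 0" "r c > 0" "x b = x a + r a + r b" "squares_touch x y r a b"
    and "squares_touch x y r a c" "squares_touch x y r b c"
    and "squares_apart x y r a c" "squares_apart x y r b c"
    and "y c - r c = min (y a + r a) (y b + r b)" "y a + r a \<noteq> y b + r b"
  shows "x c + r c = x a + r a \<longleftrightarrow> y a + r a < y b + r b"
proof -
  have straddle: "x c - r c \<le> x a + r a" "x a + r a \<le> x c + r c"
    using squares_touch_straddles_contact_line[OF assms(4,6,7)] by auto
  show ?thesis
  proof (cases "y a + r a < y b + r b")
    case True
    then have "\<bar>y b - y c\<bar> < r b + r c"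
      using assms(1-3,5,10) unfolding squares_touch_def abs_le_iff abs_less_iff by auto
    then have "r b + r c \<le> \<bar>x b - x c\<bar>"
      using assms(9) by (auto simp: squares_apart_def)
    then show ?thesis
      using True straddle assms(2-4) by linarith
  next
    case False
    then have "\<bar>y a - y c\<bar> < r a + r c"
      using assms(1-3,5,10,11) unfolding squares_touch_def abs_le_iff abs_less_iff by auto
    then have "r a + r c \<le> \<bar>x a - x c\<bar>"
      using assms(8) by (auto simp: squares_apart_def)
    then show ?thesis
      using False straddle assms(1,3) by linarith
  qed
qed

lemma common_neighbour_below_side:
  assumes "r a > 0" "r b > 0" "r c > 0" "x b = x a + r a + r b" "squares_touch x y r a b"
    and "squares_touch x y r a c" "squares_touch x y r b c"
    and "squares_apart x y r a c" "squares_apart x y r b c"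
    and "y c + r c = max (y a - r a) (y b - r b)" "y a - r a \<noteq> y b - r b"
  shows "x c + r c = x a + r a \<longleftrightarrow> y b - r b < y a - r a"
proof -
  have "- y c - r c = min (- y a + r a) (- y b + r b)" "- y a + r a \<noteq> - y b + r b"
    using assms(10,11) by (auto simp: min_def max_def)
  then show ?thesis
    using common_neighbour_above_side[of r a b c x "\<lambda>i. - y i"] assms(1-9)
    by (auto simp: squares_apart_axis_symmetries squares_touch_axis_symmetries)
qed

definition neighbour_slot ::
    "('a \<Rightarrow> real) \<Rightarrow> ('a \<Rightarrow> real) \<Rightarrow> ('a \<Rightarrow> real) \<Rightarrow> 'a \<Rightarrow> 'a \<Rightarrow> 'a \<Rightarrow> bool \<times> bool" where
  "neighbour_slot x y r a b c =
    (y c - r c = min (y a + r a) (y b + r b), x c + r c = x a + r a)"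

lemma inj_on_neighbour_slot:
  assumes "\<forall>i\<in>{a, b} \<union> C. r i > 0" "x b = x a + r a + r b"
    and common: "\<forall>c\<in>C. squares_touch x y r a c \<and> squares_touch x y r b c \<and>
      squares_apart x y r a c \<and> squares_apart x y r b c"
    and packed: "\<forall>c\<in>C. \<forall>d\<in>C. c \<noteq> d \<longrightarrow> squares_apart x y r c d"
  shows "inj_on (neighbour_slot x y r a b) C"
proof (rule inj_onI)
  fix c d assume c: "c \<in> C" and d: "d \<in> C"
    and slot: "neighbour_slot x y r a b c = neighbour_slot x y r a b d"
  have above_or_below:
      "y e - r e = min (y a + r a) (y b + r b) \<or> y e + r e = max (y a - r a) (y b - r b)"
    if "e \<in> C" for e
    using common_neighbour_above_or_below[of r a b e x y] assms(1,2) common that by auto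
  have "y c - r c = y d - r d \<or> y c + r c = y d + r d"
      "x c + r c = x a + r a \<longleftrightarrow> x d + r d = x a + r a"
    using above_or_below[OF c] above_or_below[OF d] slot unfolding neighbour_slot_def by auto
  then have "\<not> squares_apart x y r c d"
    using common_neighbours_same_slot_overlap[of r c d x b a y] assms(1,2) common c d by auto
  then show "c = d"
    using packed c d by blast
qed

lemma neighbour_slot_blocked:
  assumes pos: "\<forall>i\<in>{a, b} \<union> C. r i > 0" and "r a \<noteq> r b"
    and contact: "x b = x a + r a + r b" "squares_touch x y r a b"
    and common: "\<forall>c\<in>C. squares_touch x y r a c \<and> squares_touch x y r b c \<and>
      squares_apart x y r a c \<and> squares_apart x y r b c"
  shows "\<exists>s. s \<notin> neighbour_slot x y r a b ` C"
proof -
  have pos_ab: "r a > 0" "r b > 0"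
    using pos by auto
  have neighbour: "r c > 0" "squares_touch x y r a c" "squares_touch x y r b c"
      "squares_apart x y r a c" "squares_apart x y r b c" if "c \<in> C" for c
    using pos common that by auto
  consider "y a + r a \<noteq> y b + r b" | "y a - r a \<noteq> y b - r b"
    using \<open>r a \<noteq> r b\<close> by linarith
  then show ?thesis
  proof cases
    case 1
    have "(True, y b + r b < y a + r a) \<notin> neighbour_slot x y r a b ` C"
    proof
      assume "(True, y b + r b < y a + r a) \<in> neighbour_slot x y r a b ` C"
      then obtain c where c: "c \<in> C"
        and "neighbour_slot x y r a b c = (True, y b + r b < y a + r a)" by force
      then have "y c - r c = min (y a + r a) (y b + r b)"
          "x c + r c = x a + r a \<longleftrightarrow> y b + r b < y a + r a"
        unfolding neighbour_slot_def by simp_all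
      with common_neighbour_above_side[OF pos_ab neighbour(1)[OF c] contact neighbour(2-5)[OF c] _ 1]
      show False using 1 by argo
    qed
    then show ?thesis ..
  next
    case 2
    have "(False, y a - r a < y b - r b) \<notin> neighbour_slot x y r a b ` C"
    proof
      assume "(False, y a - r a < y b - r b) \<in> neighbour_slot x y r a b ` C"
      then obtain c where c: "c \<in> C"
        and "neighbour_slot x y r a b c = (False, y a - r a < y b - r b)" by force
      then have "y c + r c = max (y a - r a) (y b - r b)"
          "x c + r c = x a + r a \<longleftrightarrow> y a - r a < y b - r b"
        using common_neighbour_above_or_below[OF pos_ab neighbour(1)[OF c] contact(1) neighbour(2-5)[OF c]]
        unfolding neighbour_slot_def by simp_all
      with common_neighbour_below_side[OF pos_ab neighbour(1)[OF c] contact neighbour(2-5)[OF c] _ 2]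
      show False using 2 by argo
    qed
    then show ?thesis ..
  qed
qed

lemma card_common_neighbours_le_3_normalized:
  assumes "\<forall>i\<in>{a, b} \<union> C. r i > 0" "r a \<noteq> r b"
    and "x b = x a + r a + r b" "squares_touch x y r a b"
    and "\<forall>c\<in>C. squares_touch x y r a c \<and> squares_touch x y r b c \<and>
      squares_apart x y r a c \<and> squares_apart x y r b c"
    and "\<forall>c\<in>C. \<forall>d\<in>C. c \<noteq> d \<longrightarrow> squares_apart x y r c d"
  shows "card C \<le> 3"
proof -
  obtain s where s: "s \<notin> neighbour_slot x y r a b ` C"
    using neighbour_slot_blocked[OF assms(1-5)] by blast
  have "card C = card (neighbour_slot x y r a b ` C)"
    using inj_on_neighbour_slot[OF assms(1,3,5,6)] by (simp add: card_image)
  also have "\<dots> \<le> card (UNIV - {s})"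
    using s by (intro card_mono) auto
  also have "\<dots> = card (UNIV :: (bool \<times> bool) set) - 1"
    by (simp add: card_Diff_singleton)
  also have "\<dots> = 3"
    by (simp add: card_cartesian_product flip: UNIV_Times_UNIV)
  finally show ?thesis .
qed

lemma card_common_neighbours_le_3:
  assumes "\<forall>i\<in>{a, b} \<union> C. r i > 0" "r a \<noteq> r b"
    and "squares_touch x y r a b" "squares_apart x y r a b"
    and "\<forall>c\<in>C. squares_touch x y r a c \<and> squares_touch x y r b c \<and>
      squares_apart x y r a c \<and> squares_apart x y r b c"
    and "\<forall>c\<in>C. \<forall>d\<in>C. c \<noteq> d \<longrightarrow> squares_apart x y r c d"
  shows "card C \<le> 3"
proof -
  consider "x b = x a + r a + r b" | "- x b = - x a + r a + r b"
    | "y b = y a + r a + r b" | "- y b = - y a + r a + r b"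
    using assms(3,4) unfolding squares_touch_def squares_apart_def by linarith
  then show ?thesis
  proof cases
    case 1
    then show ?thesis
      using card_common_neighbours_le_3_normalized[of a b C r x y] assms by blast
  next
    case 2
    then show ?thesis
      using card_common_neighbours_le_3_normalized[of a b C r "\<lambda>i. - x i" y] assms
      by (simp add: squares_apart_axis_symmetries squares_touch_axis_symmetries)
  next
    case 3
    then show ?thesis
      using card_common_neighbours_le_3_normalized[of a b C r y x] assms
      by (simp add: squares_apart_axis_symmetries squares_touch_axis_symmetries)
  next
    case 4
    then show ?thesis
      using card_common_neighbours_le_3_normalized[of a b C r "\<lambda>i. - y i" x] assms
      by (simp add: squares_apart_axis_symmetries squares_touch_axis_symmetries)
  qed
qed

lemma hsquare_eq_box:
  assumes "r > 0"
  shows "hsquare r p = {fst p - r .. fst p + r} \<times> {snd p - r .. snd p + r}"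
proof (intro equalityI subsetI)
  fix z assume "z \<in> hsquare r p"
  then obtain u v where uv: "\<bar>u\<bar> \<le> 1" "\<bar>v\<bar> \<le> 1" "z = r *\<^sub>R (u, v) + p"
    unfolding hsquare_def unit_square_def by (force simp: abs_le_iff)
  have "\<bar>r * u\<bar> \<le> r" "\<bar>r * v\<bar> \<le> r"
    using uv(1,2) assms by (simp_all add: abs_mult mult_left_le)
  then show "z \<in> {fst p - r .. fst p + r} \<times> {snd p - r .. snd p + r}"
    using uv(3) by (cases p) (auto simp: abs_le_iff)
next
  fix z assume z: "z \<in> {fst p - r .. fst p + r} \<times> {snd p - r .. snd p + r}"
  obtain a b where ab: "z = (a, b)" by (cases z)
  define q where "q = ((a - fst p) / r, (b - snd p) / r)"
  have "q \<in> unit_square"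
    using z assms unfolding ab q_def unit_square_def by (auto simp: field_simps)
  moreover have "z = r *\<^sub>R q + p"
    using assms unfolding ab q_def by (cases p) (auto simp: field_simps)
  ultimately show "z \<in> hsquare r p"
    unfolding hsquare_def by blast
qed

lemma hsquares_intersect_imp_close:
  assumes "r > 0" "r' > 0" "hsquare r p \<inter> hsquare r' p' \<noteq> {}"
  shows "\<bar>fst p - fst p'\<bar> \<le> r + r'" "\<bar>snd p - snd p'\<bar> \<le> r + r'"
  using assms by (auto simp: hsquare_eq_box abs_le_iff)

lemma hsquare_interiors_disjoint_imp_separated:
  assumes "r > 0" "r' > 0" "interior (hsquare r p) \<inter> interior (hsquare r' p') = {}"
  shows "r + r' \<le> \<bar>fst p - fst p'\<bar> \<or> r + r' \<le> \<bar>snd p - snd p'\<bar>"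
  using assms by (auto simp: hsquare_eq_box interior_Times Times_Int_Times abs_if)

lemma contact_edge_commute: "contact_edge r p i j \<longleftrightarrow> contact_edge r p j i"
  by (auto simp: contact_edge_def)

lemma contact_edge_imp_squares_touch:
  assumes "homothetic_packing n r p" "i \<in> {1..n}" "j \<in> {1..n}" "contact_edge r p i j"
  shows "squares_touch (\<lambda>i. fst (p i)) (\<lambda>i. snd (p i)) r i j"
  using hsquares_intersect_imp_close[of "r i" "r j" "p i" "p j"] assms
  by (auto simp: homothetic_packing_def contact_edge_def squares_touch_def)

lemma homothetic_packing_imp_squares_apart:
  assumes "homothetic_packing n r p" "i \<in> {1..n}" "j \<in> {1..n}" "i \<noteq> j"
  shows "squares_apart (\<lambda>i. fst (p i)) (\<lambda>i. snd (p i)) r i j"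
  using hsquare_interiors_disjoint_imp_separated[of "r i" "r j" "p i" "p j"] assms
  by (auto simp: homothetic_packing_def squares_apart_def)

lemma weak_generic_radii_distinct:
  assumes "weak_generic n r" "a \<in> {1..n}" "b \<in> {1..n}" "a \<noteq> b" "6 \<le> n"
  shows "r a \<noteq> r b"
proof
  assume eq: "r a = r b"
  define \<sigma> :: "nat \<Rightarrow> int"
    where "\<sigma> i = (if i = a then 1 else if i = b then -1 else 0)" for i
  have "(\<forall>i\<in>{1..n}. \<sigma> i \<in> {-1, 0, 1}) \<and> 4 \<le> card {i\<in>{1..n}. \<sigma> i = 0} \<and>
      (\<Sum>i\<in>{1..n}. of_int (\<sigma> i) * r i) = 0"
  proof (intro conjI)
    show "\<forall>i\<in>{1..n}. \<sigma> i \<in> {-1, 0, 1}"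
      by (simp add: \<sigma>_def)
    have "{i\<in>{1..n}. \<sigma> i = 0} = {1..n} - {a, b}"
      by (auto simp: \<sigma>_def)
    then show "4 \<le> card {i\<in>{1..n}. \<sigma> i = 0}"
      using assms(2-5) by (simp add: card_Diff_subset)
    have "of_int (\<sigma> i) * r i = (if i = a then r i else 0) - (if i = b then r i else 0)" for i
      using assms(4) by (simp add: \<sigma>_def)
    then show "(\<Sum>i\<in>{1..n}. of_int (\<sigma> i) * r i) = 0"
      using assms(2,3) eq by (simp add: sum_subtractf)
  qed
  then have "\<sigma> a = 0"
    using assms(1)[unfolded weak_generic_def, THEN spec[of _ \<sigma>]] assms(2) by blast
  then show False
    by (simp add: \<sigma>_def)
qed

lemma homothetic_packing_card_common_neighbours_le_3:
  assumes packing: "homothetic_packing n r p" and "weak_generic n r"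
    and "a \<in> {1..n}" "b \<in> {1..n}" "contact_edge r p a b" "C \<subseteq> {1..n}"
    and common: "\<forall>c\<in>C. contact_edge r p a c \<and> contact_edge r p b c"
  shows "card C \<le> 3"
proof (cases "n < 6")
  case True
  \<comment> \<open>Weak genericity says nothing here, but \<open>C\<close> misses \<open>a\<close> and \<open>b\<close>.\<close>
  have "C \<subseteq> {1..n} - {a, b}"
    using assms(3-7) by (auto simp: contact_edge_def)
  then have "card C \<le> card ({1..n} - {a, b})"
    by (intro card_mono) auto
  also have "\<dots> = n - 2"
    using assms(3-5) by (simp add: card_Diff_subset contact_edge_def)
  finally show ?thesis
    using True by linarith
next
  case False
  define x y where "x = (\<lambda>i. fst (p i))" and "y = (\<lambda>i. snd (p i))"
  have touch: "squares_touch x y r i j"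
    if "i \<in> {1..n}" "j \<in> {1..n}" "contact_edge r p i j" for i j
    using contact_edge_imp_squares_touch[OF packing that] unfolding x_def y_def .
  have apart: "squares_apart x y r i j" if "i \<in> {1..n}" "j \<in> {1..n}" "i \<noteq> j" for i j
    using homothetic_packing_imp_squares_apart[OF packing that] unfolding x_def y_def .
  have distinct: "a \<noteq> b" "a \<notin> C" "b \<notin> C"
    using assms(5) common by (auto simp: contact_edge_def)
  show ?thesis
  proof (rule card_common_neighbours_le_3)
    show "\<forall>i\<in>{a, b} \<union> C. r i > 0"
      using packing assms(3,4,6) unfolding homothetic_packing_def by auto
    show "r a \<noteq> r b"
      using weak_generic_radii_distinct assms(2-4) distinct False by simp
    show "squares_touch x y r a b" "squares_apart x y r a b"
      using touch apart assms(3-5) distinct by simp_all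
    show "\<forall>c\<in>C. squares_touch x y r a c \<and> squares_touch x y r b c \<and>
        squares_apart x y r a c \<and> squares_apart x y r b c"
      using touch apart assms(3,4,6) distinct common by blast
    show "\<forall>c\<in>C. \<forall>d\<in>C. c \<noteq> d \<longrightarrow> squares_apart x y r c d"
      using apart assms(6) by blast
  qed
qed

theorem lemma18:
  fixes n :: nat and r :: "nat \<Rightarrow> real" and p :: "nat \<Rightarrow> real \<times> real"
  assumes "homothetic_packing n r p"
    and "weak_generic n r"
  shows "\<not> (\<exists>a1 a2 a3 a4 a5 a6.
            {a1, a2, a3, a4, a5, a6} \<subseteq> {1..n} \<and> card {a1, a2, a3, a4, a5, a6} = 6 \<and>
            contact_edge r p a1 a2 \<and> contact_edge r p a1 a4 \<and> contact_edge r p a1 a5 \<and>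
            contact_edge r p a2 a3 \<and> contact_edge r p a2 a4 \<and> contact_edge r p a2 a5 \<and>
            contact_edge r p a2 a6 \<and> contact_edge r p a3 a5 \<and> contact_edge r p a3 a6 \<and>
            contact_edge r p a4 a5 \<and> contact_edge r p a5 a6)"
proof
  assume "\<exists>a1 a2 a3 a4 a5 a6.
            {a1, a2, a3, a4, a5, a6} \<subseteq> {1..n} \<and> card {a1, a2, a3, a4, a5, a6} = 6 \<and>
            contact_edge r p a1 a2 \<and> contact_edge r p a1 a4 \<and> contact_edge r p a1 a5 \<and>
            contact_edge r p a2 a3 \<and> contact_edge r p a2 a4 \<and> contact_edge r p a2 a5 \<and>
            contact_edge r p a2 a6 \<and> contact_edge r p a3 a5 \<and> contact_edge r p a3 a6 \<and>
            contact_edge r p a4 a5 \<and> contact_edge r p a5 a6"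
  then obtain a1 a2 a3 a4 a5 a6 where
    sub: "{a1, a2, a3, a4, a5, a6} \<subseteq> {1..n}" and six: "card {a1, a2, a3, a4, a5, a6} = 6" and
    "contact_edge r p a1 a2" "contact_edge r p a1 a5" "contact_edge r p a2 a3"
    "contact_edge r p a2 a4" "contact_edge r p a2 a5" "contact_edge r p a2 a6"
    "contact_edge r p a3 a5" "contact_edge r p a4 a5" "contact_edge r p a5 a6"
    by blast
  then have "card {a1, a3, a4, a6} \<le> 3"
    using sub by (intro homothetic_packing_card_common_neighbours_le_3[OF assms, of a2 a5])
      (simp_all add: contact_edge_commute)
  moreover have "distinct [a1, a2, a3, a4, a5, a6]"
    using six by (intro card_distinct) simp
  ultimately show False
    by simp
qed

end
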